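(* Let $\Omega=(x_l,x_r)\times(x_b,x_t)\subset\mathbb{R}^2$, $T>0$, and let $u:\overline{\Omega}\times[0,T]\to\mathbb{C}$ be such that $u$, $\partial_t u$ and all spatial partial derivatives of $u$ up to order $2$ are continuous on $\overline{\Omega}\times[0,T]$, $u(\mathbf{x},0)=0$ for all $\mathbf{x}\in\partial\Omega$, and $i\partial_t u+\partial_{x_1}^2u+\partial_{x_2}^2u=0$ on $\overline{\Omega}\times(0,T]$. Suppose that on each closed edge the high-frequency boundary condition holds: $$\partial_n u+e^{-i\pi/4}\partial_t^{1/2}u-\tfrac12 e^{i\pi/4}\,\partial_{x_2}^2\partial_t^{-1/2}u=0\ \text{ on }\overline{\Gamma_l}\cup\overline{\Gamma_r},\qquad \partial_n u+e^{-i\pi/4}\partial_t^{1/2}u-\tfrac12 e^{i\pi/4}\,\partial_{x_1}^2\partial_t^{-1/2}u=0\ \text{ on }\overline{\Gamma_b}\cup\overline{\Gamma_t},$$ for $t\in(0,T]$. Then at each corner $c=\overline{\Gamma_a}\cap\overline{\Gamma_{a'}}$ (with $a\in\{l,r\}$, $a'\in\{b,t\}$) one has, for $t\in(0,T]$, $$\partial_{n_a}u(c,t)+\partial_{n_{a'}}u(c,t)+\tfrac{3}{2}e^{-i\pi/4}\,\partial_t^{1/2}u(c,t)=0,$$ where $\partial_{n_a}$ and $\partial_{n_{a'}}$ are the outward normal derivatives of the two edges meeting at $c$.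
   Context: Edges: $\Gamma_l=\{x_l\}\times(x_b,x_t)$, $\Gamma_r=\{x_r\}\times(x_b,x_t)$, $\Gamma_b=(x_l,x_r)\times\{x_b\}$, $\Gamma_t=(x_l,x_r)\times\{x_t\}$; $\partial_n$ is the outward normal derivative (so $\partial_n=\partial_{x_1}$ on $\Gamma_r$, $-\partial_{x_1}$ on $\Gamma_l$, $\partial_{x_2}$ on $\Gamma_t$, $-\partial_{x_2}$ on $\Gamma_b$), extended by continuity to the closed edges. Fractional operators in time (acting pointwise in $\mathbf{x}$): $\partial_t^{-1/2}f(t)=\frac{1}{\sqrt\pi}\int_0^t\frac{f(s)}{\sqrt{t-s}}\,ds$ and $\partial_t^{1/2}f=\frac{d}{dt}\,\partial_t^{-1/2}f$. *)

theory Defs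
  imports "HOL-Analysis.Analysis"
begin

definition frac_int_half :: "(real \<Rightarrow> complex) \<Rightarrow> real \<Rightarrow> complex" where
  "frac_int_half f t = (1 / sqrt pi) *\<^sub>R integral {0..t} (\<lambda>s. f s /\<^sub>R sqrt (t - s))"

definition frac_deriv_half :: "real \<Rightarrow> (real \<Rightarrow> complex) \<Rightarrow> real \<Rightarrow> complex" where
  "frac_deriv_half T f t = vector_derivative (frac_int_half f) (at t within {0..T})"

definition d2_within :: "real set \<Rightarrow> (real \<Rightarrow> complex) \<Rightarrow> real \<Rightarrow> complex" where
  "d2_within S g y =
     vector_derivative (\<lambda>z. vector_derivative g (at z within S)) (at y within S)"

end

theory Submission
  imports Defs
begin

text \<open>Apply the half integral \<open>\<partial>_t^{-1/2}\<close> to the Schroedinger equation at a corner. It commutes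
  with spatial derivatives, and as \<open>u\<close> vanishes at \<open>t = 0\<close> it turns \<open>\<partial>_t u\<close> into \<open>\<partial>_t^{1/2} u\<close>; so the
  tangential terms of the two edge conditions meeting at the corner add up to \<open>-i \<partial>_t^{1/2} u\<close>.
  Adding the two conditions and using \<open>i e^{i\<pi>/4} = -e^{-i\<pi>/4}\<close> changes the coefficient of
  \<open>e^{-i\<pi>/4} \<partial>_t^{1/2} u\<close> from \<open>2\<close> to \<open>2 - 1/2 = 3/2\<close>.\<close>

lemma scaled_parabola_mem:
  fixes t w :: real
  assumes "0 \<le> t" "t \<le> T" "w \<in> {0..1}"
  shows "t * (1 - w\<^sup>2) \<in> {0..T}"
proof -
  have "0 \<le> w\<^sup>2" "w\<^sup>2 \<le> 1" using assms(3) by (auto simp: power_le_one)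
  then have "0 \<le> t * (1 - w\<^sup>2)" "0 \<le> t * w\<^sup>2" "t * w\<^sup>2 \<le> t"
    using assms(1) by (auto simp: mult_left_le)
  then show ?thesis using assms(2) by (simp add: algebra_simps)
qed

lemma continuous_on_slice:
  assumes "continuous_on (A \<times> B) (\<lambda>(a, b). F a b)" "a \<in> A"
  shows "continuous_on B (F a)"
proof -
  have "continuous_on B ((\<lambda>(a, b). F a b) \<circ> Pair a)"
    using assms by (intro continuous_on_compose continuous_on_subset[OF assms(1)]) (auto intro!: continuous_intros)
  then show ?thesis by (simp add: o_def)
qed

lemma continuous_on_slice_middle:
  assumes "continuous_on (X \<times> Y \<times> U) (\<lambda>(x, y, t). f x y t)" "y \<in> Y"
  shows "continuous_on (X \<times> U) (\<lambda>(x, t). f x y t)"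
proof -
  have "continuous_on (X \<times> U) ((\<lambda>(x, y, t). f x y t) \<circ> (\<lambda>p. (fst p, y, snd p)))"
    using assms by (intro continuous_on_compose continuous_on_subset[OF assms(1)]) (auto intro!: continuous_intros)
  then show ?thesis by (simp add: o_def split_beta)
qed

lemma continuous_on_compose_parabola:
  fixes f :: "real \<Rightarrow> 'a::topological_space"
  assumes "continuous_on {0..T} f" "0 \<le> t" "t \<le> T"
  shows "continuous_on {0..1} (\<lambda>w. f (t * (1 - w\<^sup>2)))"
  by (rule continuous_on_compose2[OF assms(1)])
     (use scaled_parabola_mem[OF assms(2,3)] in \<open>auto intro!: continuous_intros\<close>)

text \<open>The substitution \<open>s = t (1 - w\<^sup>2)\<close> absorbs the singularity of the kernel: the half integral
  becomes the integral of a continuous function over \<open>[0, 1]\<close>, to which the fundamental theorem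
  of calculus and Leibniz' rule apply.\<close>

lemma frac_int_half_kernel_has_integral:
  fixes f :: "real \<Rightarrow> complex"
  assumes t: "t > 0" and cf: "continuous_on {0..t} f"
  shows "((\<lambda>s. f s /\<^sub>R sqrt (t - s)) has_integral
           (2 * sqrt t) *\<^sub>R integral {0..1} (\<lambda>w. f (t * (1 - w\<^sup>2)))) {0..t}"
proof -
  define g where "g s = sqrt (t - s) / sqrt t" for s
  define g' where "g' s = - (1 / (2 * sqrt (t - s))) / sqrt t" for s
  define h where "h w = (2 * sqrt t) *\<^sub>R f (t * (1 - w\<^sup>2))" for w
  have ch: "continuous_on {0..1} h"
    unfolding h_def using continuous_on_compose_parabola[OF cf] t by (auto intro!: continuous_intros)
  have sub: "((\<lambda>s. g' s *\<^sub>R h (g s)) has_integral (integral {g 0..g t} h - integral {g t..g 0} h)) {0..t}"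
  proof (rule has_integral_substitution_general[where s="{t}" and c=0 and d=1])
    show "g ` {0..t} \<subseteq> {0..1}"
      using t by (auto simp: g_def real_sqrt_le_iff divide_le_eq_1)
    show "continuous_on {0..t} g" unfolding g_def using t by (intro continuous_intros) auto
    fix x assume "x \<in> {0..t} - {t}"
    then show "(g has_field_derivative g' x) (at x within {0..t})"
      unfolding g_def g'_def using t by (auto intro!: derivative_eq_intros simp: field_simps)
  qed (use t ch in auto)
  have "g 0 = 1" "g t = 0" using t by (auto simp: g_def)
  then have "((\<lambda>s. - (g' s *\<^sub>R h (g s))) has_integral integral {0..1} h) {0..t}"
    using has_integral_neg[OF sub] by simp
  moreover have "- (g' s *\<^sub>R h (g s)) = f s /\<^sub>R sqrt (t - s)" if "s \<in> {0..t}" for s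
  proof (cases "s = t")
    case False
    with that have st: "s < t" by auto
    have "(g s)\<^sup>2 = (t - s) / t" using st t by (simp add: g_def power_divide)
    then have "t * (1 - (g s)\<^sup>2) = s" using t by (simp add: field_simps)
    then have "h (g s) = (2 * sqrt t) *\<^sub>R f s" by (simp add: h_def)
    then show ?thesis using st t by (simp add: g'_def field_simps)
  qed (simp add: g'_def g_def)
  ultimately have "((\<lambda>s. f s /\<^sub>R sqrt (t - s)) has_integral integral {0..1} h) {0..t}"
    by (rule has_integral_eq[rotated])
  then show ?thesis by (simp add: h_def[abs_def])
qed

corollary frac_int_half_substitution:
  fixes f :: "real \<Rightarrow> complex"
  assumes "t > 0" "continuous_on {0..t} f"
  shows "frac_int_half f t = (2 * sqrt t / sqrt pi) *\<^sub>R integral {0..1} (\<lambda>w. f (t * (1 - w\<^sup>2)))"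
  using integral_unique[OF frac_int_half_kernel_has_integral[OF assms]]
  by (simp add: frac_int_half_def)

lemma frac_int_half_cong:
  assumes "\<And>s. s \<in> {0<..t} \<Longrightarrow> f s = g s"
  shows "frac_int_half f t = frac_int_half g t"
  unfolding frac_int_half_def
  by (rule arg_cong[where f = "scaleR _"], rule integral_spike[where S = "{0}"]) (use assms in auto)

lemma frac_int_half_add:
  fixes f g :: "real \<Rightarrow> complex"
  assumes "t > 0" "continuous_on {0..t} f" "continuous_on {0..t} g"
  shows "frac_int_half (\<lambda>s. f s + g s) t = frac_int_half f t + frac_int_half g t"
proof -
  have "(\<lambda>s. f s /\<^sub>R sqrt (t - s)) integrable_on {0..t}" "(\<lambda>s. g s /\<^sub>R sqrt (t - s)) integrable_on {0..t}"
    using frac_int_half_kernel_has_integral[OF assms(1,2)] frac_int_half_kernel_has_integral[OF assms(1,3)]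
    by blast+
  then show ?thesis by (simp add: frac_int_half_def scaleR_add_right integral_add)
qed

lemma frac_int_half_mult:
  "frac_int_half (\<lambda>s. c * f s) t = c * frac_int_half f t"
  by (simp add: frac_int_half_def scaleR_conv_of_real divide_inverse_commute mult.left_commute)

lemma has_vector_derivative_compose_within:
  fixes v :: "real \<Rightarrow> 'a::real_normed_vector"
  assumes "(v has_vector_derivative v') (at (g x) within S)"
    and "(g has_real_derivative g') (at x within A)" and "g ` A \<subseteq> S"
  shows "((\<lambda>y. v (g y)) has_vector_derivative g' *\<^sub>R v') (at x within A)"
  using vector_diff_chain_within[of g g' x A v v'] has_vector_derivative_within_subset[OF assms(1,3)] assms(2)
  by (simp add: o_def has_real_derivative_iff_has_vector_derivative)

lemma integral_parabola_by_parts: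
  fixes v v' :: "real \<Rightarrow> complex"
  assumes dv: "\<And>s. s \<in> {0..T} \<Longrightarrow> (v has_vector_derivative v' s) (at s within {0..T})"
    and cv': "continuous_on {0..T} v'" and v0: "v 0 = 0" and t: "0 \<le> t" "t \<le> T"
  shows "integral {0..1} (\<lambda>w. v (t * (1 - w\<^sup>2)))
           = (2 * t) *\<^sub>R integral {0..1} (\<lambda>w. w\<^sup>2 *\<^sub>R v' (t * (1 - w\<^sup>2)))"
proof -
  have cv: "continuous_on {0..T} v" using dv by (rule continuous_on_vector_derivative)
  have "((\<lambda>w. v (t * (1 - w\<^sup>2)) + w *\<^sub>R ((- 2 * t * w) *\<^sub>R v' (t * (1 - w\<^sup>2))))
      has_integral (1 *\<^sub>R v (t * (1 - 1\<^sup>2)) - 0 *\<^sub>R v (t * (1 - 0\<^sup>2)))) {0..1}"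
  proof (rule fundamental_theorem_of_calculus[where f="\<lambda>w. w *\<^sub>R v (t * (1 - w\<^sup>2))"])
    fix w :: real assume w: "w \<in> {0..1}"
    have "((\<lambda>y. v (t * (1 - y\<^sup>2))) has_vector_derivative (- 2 * t * w) *\<^sub>R v' (t * (1 - w\<^sup>2)))
        (at w within {0..1})"
      using scaled_parabola_mem[OF t] w
      by (intro has_vector_derivative_compose_within[OF dv]) (auto intro!: derivative_eq_intros)
    then show "((\<lambda>w. w *\<^sub>R v (t * (1 - w\<^sup>2))) has_vector_derivative
        v (t * (1 - w\<^sup>2)) + w *\<^sub>R ((- 2 * t * w) *\<^sub>R v' (t * (1 - w\<^sup>2)))) (at w within {0..1})"
      by (auto intro!: derivative_eq_intros)
  qed simp
  then have "((\<lambda>w. v (t * (1 - w\<^sup>2)) - (2 * t) *\<^sub>R (w\<^sup>2 *\<^sub>R v' (t * (1 - w\<^sup>2)))) has_integral 0) {0..1}"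
    using v0 by (simp add: scaleR_scaleR power2_eq_square algebra_simps)
  moreover have "(\<lambda>w. v (t * (1 - w\<^sup>2))) integrable_on {0..1}"
    "(\<lambda>w. w\<^sup>2 *\<^sub>R v' (t * (1 - w\<^sup>2))) integrable_on {0..1}"
    using continuous_on_compose_parabola[OF cv t] continuous_on_compose_parabola[OF cv' t]
    by (auto intro!: integrable_continuous_real continuous_intros)
  then have "((\<lambda>w. v (t * (1 - w\<^sup>2)) - (2 * t) *\<^sub>R (w\<^sup>2 *\<^sub>R v' (t * (1 - w\<^sup>2)))) has_integral
      integral {0..1} (\<lambda>w. v (t * (1 - w\<^sup>2)))
      - (2 * t) *\<^sub>R integral {0..1} (\<lambda>w. w\<^sup>2 *\<^sub>R v' (t * (1 - w\<^sup>2)))) {0..1}"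
    by (intro has_integral_diff has_integral_cmul integrable_integral)
  ultimately show ?thesis by (auto dest: has_integral_unique)
qed

lemma has_vector_derivative_integral_parabola:
  fixes v v' :: "real \<Rightarrow> complex"
  assumes dv: "\<And>s. s \<in> {0..T} \<Longrightarrow> (v has_vector_derivative v' s) (at s within {0..T})"
    and cv': "continuous_on {0..T} v'" and t: "t \<in> {0..T}"
  shows "((\<lambda>\<tau>. integral {0..1} (\<lambda>w. v (\<tau> * (1 - w\<^sup>2)))) has_vector_derivative
           integral {0..1} (\<lambda>w. (1 - w\<^sup>2) *\<^sub>R v' (t * (1 - w\<^sup>2)))) (at t within {0..T})"
proof -
  have "((\<lambda>\<tau>. integral (cbox 0 1) (\<lambda>w. v (\<tau> * (1 - w\<^sup>2)))) has_vector_derivative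
           integral (cbox 0 1) (\<lambda>w. (1 - w\<^sup>2) *\<^sub>R v' (t * (1 - w\<^sup>2)))) (at t within {0..T})"
  proof (rule leibniz_rule_vector_derivative)
    fix \<tau> w :: real assume "\<tau> \<in> {0..T}" "w \<in> cbox 0 1"
    then show "((\<lambda>x. v (x * (1 - w\<^sup>2))) has_vector_derivative (1 - w\<^sup>2) *\<^sub>R v' (\<tau> * (1 - w\<^sup>2)))
        (at \<tau> within {0..T})"
      using scaled_parabola_mem
      by (intro has_vector_derivative_compose_within[OF dv])
         (auto simp: image_subset_iff intro!: derivative_eq_intros)
  next
    fix \<tau> assume "\<tau> \<in> {0..T}"
    then show "(\<lambda>w. v (\<tau> * (1 - w\<^sup>2))) integrable_on cbox 0 1"
      using continuous_on_compose_parabola[OF continuous_on_vector_derivative[OF dv]]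
      by (auto intro: integrable_continuous_real)
  next
    have "(\<lambda>p. fst p * (1 - (snd p)\<^sup>2)) ` ({0..T} \<times> {0..1}) \<subseteq> {0..T}"
      using scaled_parabola_mem by auto
    then show "continuous_on ({0..T} \<times> cbox 0 1) (\<lambda>(\<tau>, w). (1 - w\<^sup>2) *\<^sub>R v' (\<tau> * (1 - w\<^sup>2)))"
      unfolding cbox_interval split_beta
      by (auto intro!: continuous_intros continuous_on_compose2[OF cv'])
  qed (use t in auto)
  then show ?thesis by (simp add: cbox_interval)
qed

lemma has_vector_derivative_frac_int_half:
  fixes v v' :: "real \<Rightarrow> complex"
  assumes dv: "\<And>s. s \<in> {0..T} \<Longrightarrow> (v has_vector_derivative v' s) (at s within {0..T})"
    and cv': "continuous_on {0..T} v'" and v0: "v 0 = 0" and t: "t \<in> {0<..T}"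
  shows "(frac_int_half v has_vector_derivative frac_int_half v' t) (at t within {0..T})"
proof -
  have t0: "0 < t" "t \<le> T" using t by auto
  have cv: "continuous_on {0..T} v" using dv by (rule continuous_on_vector_derivative)
  define c where "c \<tau> = 2 * sqrt \<tau> / sqrt pi" for \<tau>
  define K where "K \<tau> = integral {0..1} (\<lambda>w. v (\<tau> * (1 - w\<^sup>2)))" for \<tau>
  define A where "A = integral {0..1} (\<lambda>w. v' (t * (1 - w\<^sup>2)))"
  define B where "B = integral {0..1} (\<lambda>w. w\<^sup>2 *\<^sub>R v' (t * (1 - w\<^sup>2)))"
  have rep: "frac_int_half v \<tau> = c \<tau> *\<^sub>R K \<tau>" if "\<tau> \<in> {0..T}" for \<tau>
  proof (cases "\<tau> = 0")
    case False
    with that show ?thesis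
      unfolding c_def K_def by (intro frac_int_half_substitution continuous_on_subset[OF cv]) auto
  qed (simp add: frac_int_half_def c_def)
  have ds: "(c has_real_derivative 1 / (sqrt pi * sqrt t)) (at t within {0..T})"
    unfolding c_def using t0 by (auto intro!: derivative_eq_intros simp: field_simps)
  have "integral {0..1} (\<lambda>w. (1 - w\<^sup>2) *\<^sub>R v' (t * (1 - w\<^sup>2))) = A - B"
    unfolding A_def B_def
    using continuous_on_compose_parabola[OF cv' less_imp_le[OF t0(1)] t0(2)]
    by (subst integral_diff[symmetric])
       (auto simp: algebra_simps intro!: integrable_continuous_real continuous_intros)
  then have dK: "(K has_vector_derivative A - B) (at t within {0..T})"
    unfolding K_def using has_vector_derivative_integral_parabola[OF dv cv', where t = t] t0 by auto
  txt \<open>By parts, \<open>c' K\<close> equals \<open>c B\<close> at \<open>t\<close>, cancelling the \<open>-B\<close> part of \<open>K'\<close>.\<close>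
  have "K t = (2 * t) *\<^sub>R B"
    unfolding K_def B_def using integral_parabola_by_parts[OF dv cv' v0] t0 by simp
  moreover have "1 / (sqrt pi * sqrt t) * (2 * t) = c t"
    using t0 real_sqrt_mult_self[of t] by (simp add: c_def field_simps)
  ultimately have "c t *\<^sub>R (A - B) + (1 / (sqrt pi * sqrt t)) *\<^sub>R K t = c t *\<^sub>R A"
    by (simp add: algebra_simps)
  then have "((\<lambda>\<tau>. c \<tau> *\<^sub>R K \<tau>) has_vector_derivative c t *\<^sub>R A) (at t within {0..T})"
    using has_vector_derivative_scaleR[OF ds dK] by (simp add: add.commute)
  then have "(frac_int_half v has_vector_derivative c t *\<^sub>R A) (at t within {0..T})"
    by (rule has_vector_derivative_transform[rotated 2]) (use rep t0 in auto)
  moreover have "c t *\<^sub>R A = frac_int_half v' t"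
    unfolding A_def c_def using frac_int_half_substitution[of t v'] t0 continuous_on_subset[OF cv'] by auto
  ultimately show ?thesis by simp
qed

corollary frac_deriv_half_eq_frac_int_half:
  fixes v v' :: "real \<Rightarrow> complex"
  assumes "\<And>s. s \<in> {0..T} \<Longrightarrow> (v has_vector_derivative v' s) (at s within {0..T})"
    and "continuous_on {0..T} v'" and "v 0 = 0" and t: "t \<in> {0<..T}"
  shows "frac_deriv_half T v t = frac_int_half v' t"
  using vector_derivative_within_cbox[of 0 T t, unfolded cbox_interval,
      OF _ _ has_vector_derivative_frac_int_half[OF assms]] t
  unfolding frac_deriv_half_def by auto

lemma continuous_on_compose_parabola_param:
  fixes F :: "real \<Rightarrow> real \<Rightarrow> 'a::topological_space"
  assumes c: "continuous_on (S \<times> {0..T}) (\<lambda>(z, s). F z s)" and t: "0 \<le> t" "t \<le> T"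
  shows "continuous_on (S \<times> {0..1}) (\<lambda>(z, w). F z (t * (1 - w\<^sup>2)))"
proof -
  have "(\<lambda>p. (fst p, t * (1 - (snd p)\<^sup>2))) ` (S \<times> {0..1}) \<subseteq> S \<times> {0..T}"
    using scaled_parabola_mem[OF t] by auto
  then have "continuous_on (S \<times> {0..1}) ((\<lambda>(z, s). F z s) \<circ> (\<lambda>p. (fst p, t * (1 - (snd p)\<^sup>2))))"
    by (intro continuous_on_compose continuous_on_subset[OF c]) (auto intro!: continuous_intros)
  then show ?thesis by (simp add: o_def split_beta)
qed

lemma has_vector_derivative_frac_int_half_param:
  fixes p p' :: "real \<Rightarrow> real \<Rightarrow> complex"
  assumes t: "t \<in> {0<..T}"
    and dp: "\<And>z s. z \<in> {a..b} \<Longrightarrow> s \<in> {0..T} \<Longrightarrow>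
       ((\<lambda>z. p z s) has_vector_derivative p' z s) (at z within {a..b})"
    and cp: "continuous_on ({a..b} \<times> {0..T}) (\<lambda>(z, s). p z s)"
    and cp': "continuous_on ({a..b} \<times> {0..T}) (\<lambda>(z, s). p' z s)"
    and z0: "z0 \<in> {a..b}"
  shows "((\<lambda>z. frac_int_half (p z) t) has_vector_derivative frac_int_half (p' z0) t) (at z0 within {a..b})"
proof -
  have t0: "0 \<le> t" "t \<le> T" using t by auto
  have rep: "frac_int_half (q z) t = (2 * sqrt t / sqrt pi) *\<^sub>R integral (cbox 0 1) (\<lambda>w. q z (t * (1 - w\<^sup>2)))"
    if "continuous_on ({a..b} \<times> {0..T}) (\<lambda>(z, s). q z s)" "z \<in> {a..b}"
    for z and q :: "real \<Rightarrow> real \<Rightarrow> complex"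
    using t continuous_on_subset[OF continuous_on_slice[OF that]]
    by (auto simp: cbox_interval intro!: frac_int_half_substitution)
  have "((\<lambda>z. integral (cbox 0 1) (\<lambda>w. p z (t * (1 - w\<^sup>2)))) has_vector_derivative
      integral (cbox 0 1) (\<lambda>w. p' z0 (t * (1 - w\<^sup>2)))) (at z0 within {a..b})"
  proof (rule leibniz_rule_vector_derivative)
    fix z w :: real assume "z \<in> {a..b}" "w \<in> cbox 0 1"
    then show "((\<lambda>z. p z (t * (1 - w\<^sup>2))) has_vector_derivative p' z (t * (1 - w\<^sup>2))) (at z within {a..b})"
      using dp scaled_parabola_mem[OF t0] by simp
  next
    fix z assume "z \<in> {a..b}"
    then show "(\<lambda>w. p z (t * (1 - w\<^sup>2))) integrable_on cbox 0 1"
      using continuous_on_compose_parabola[OF continuous_on_slice[OF cp \<open>z \<in> {a..b}\<close>] t0]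
      by (auto simp: cbox_interval intro: integrable_continuous_real)
  next
    show "continuous_on ({a..b} \<times> cbox 0 1) (\<lambda>(z, w). p' z (t * (1 - w\<^sup>2)))"
      using continuous_on_compose_parabola_param[OF cp' t0] by (simp add: cbox_interval)
  qed (use z0 in auto)
  then have "((\<lambda>z. frac_int_half (p z) t) has_vector_derivative
      (2 * sqrt t / sqrt pi) *\<^sub>R integral (cbox 0 1) (\<lambda>w. p' z0 (t * (1 - w\<^sup>2)))) (at z0 within {a..b})"
    by (intro has_vector_derivative_transform[OF z0 rep[OF cp]] derivative_eq_intros) auto
  then show ?thesis using rep[OF cp' z0] by simp
qed

lemma d2_within_frac_int_half:
  fixes p p' p'' :: "real \<Rightarrow> real \<Rightarrow> complex"
  assumes ab: "a < b" and t: "t \<in> {0<..T}"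
    and dp: "\<And>z s. z \<in> {a..b} \<Longrightarrow> s \<in> {0..T} \<Longrightarrow>
       ((\<lambda>z. p z s) has_vector_derivative p' z s) (at z within {a..b})"
    and dp': "\<And>z s. z \<in> {a..b} \<Longrightarrow> s \<in> {0..T} \<Longrightarrow>
       ((\<lambda>z. p' z s) has_vector_derivative p'' z s) (at z within {a..b})"
    and cp: "continuous_on ({a..b} \<times> {0..T}) (\<lambda>(z, s). p z s)"
    and cp': "continuous_on ({a..b} \<times> {0..T}) (\<lambda>(z, s). p' z s)"
    and cp'': "continuous_on ({a..b} \<times> {0..T}) (\<lambda>(z, s). p'' z s)"
    and z0: "z0 \<in> {a..b}"
  shows "d2_within {a..b} (\<lambda>z. frac_int_half (\<lambda>s. p z s) t) z0 = frac_int_half (\<lambda>s. p'' z0 s) t"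
proof -
  note vector_derivative_eq = vector_derivative_within_cbox[of a b, unfolded cbox_interval, OF ab]
  have "vector_derivative (\<lambda>z. frac_int_half (p z) t) (at z within {a..b}) = frac_int_half (p' z) t"
    if "z \<in> {a..b}" for z
    using vector_derivative_eq[OF that has_vector_derivative_frac_int_half_param[OF t dp cp cp' that]] .
  then have "((\<lambda>z. vector_derivative (\<lambda>z. frac_int_half (p z) t) (at z within {a..b}))
      has_vector_derivative frac_int_half (p'' z0) t) (at z0 within {a..b})"
    by (intro has_vector_derivative_transform[OF z0 _ has_vector_derivative_frac_int_half_param[OF t dp' cp' cp'' z0]])
  then show ?thesis
    unfolding d2_within_def by (rule vector_derivative_eq[OF z0])
qed

lemma i_mult_exp_pi_quarter: "\<i> * exp (\<i> * of_real pi / 4) = - exp (- \<i> * of_real pi / 4)"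
proof -
  have "exp (\<i> * of_real pi / 2) = \<i>" using cis_conv_exp[of "pi / 2"] by (simp add: mult.commute)
  then have "\<i> * exp (\<i> * of_real pi / 4) = exp (\<i> * of_real pi / 2) * exp (\<i> * of_real pi / 4)"
    by simp
  also have "\<dots> = exp (\<i> * of_real pi) * exp (- \<i> * of_real pi / 4)"
    unfolding exp_add[symmetric] by (rule arg_cong[where f = exp]) (simp add: field_simps)
  finally show ?thesis by simp
qed

lemma frac_int_half_schroedinger:
  fixes f11 f22 g :: "real \<Rightarrow> complex"
  assumes "continuous_on {0..T} f11" "continuous_on {0..T} f22"
    and "\<And>s. s \<in> {0<..T} \<Longrightarrow> \<i> * g s + f11 s + f22 s = 0" and t: "t \<in> {0<..T}"
  shows "frac_int_half f11 t + frac_int_half f22 t = - \<i> * frac_int_half g t"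
proof -
  have "frac_int_half f11 t + frac_int_half f22 t = frac_int_half (\<lambda>s. f11 s + f22 s) t"
    using t assms(1,2) by (intro frac_int_half_add[symmetric]) (auto elim: continuous_on_subset)
  also have "\<dots> = frac_int_half (\<lambda>s. - \<i> * g s) t"
  proof (rule frac_int_half_cong)
    fix s assume "s \<in> {0<..t}"
    then have "\<i> * g s + f11 s + f22 s = 0" using t assms(3) by auto
    moreover have "f11 s + f22 s = (\<i> * g s + f11 s + f22 s) - \<i> * g s" by simp
    ultimately show "f11 s + f22 s = - \<i> * g s" by simp
  qed
  finally show ?thesis unfolding frac_int_half_mult .
qed

lemma corner_condition_algebra:
  fixes U1 U2 D a b e m :: complex
  assumes h1: "U1 + m * D - (1/2) * e * a = 0" and h2: "U2 + m * D - (1/2) * e * b = 0"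
    and h12: "a + b = - \<i> * D" and E: "\<i> * e = - m"
  shows "U1 + U2 + (3/2) * m * D = 0"
proof -
  have "U1 + U2 + (3/2) * m * D = (U1 + m * D - (1/2) * e * a) + (U2 + m * D - (1/2) * e * b)
     + (1/2) * e * (a + b + \<i> * D) - (1/2) * D * (\<i> * e + m)"
    by (simp add: field_simps)
  also have "\<dots> = 0" by (simp only: h1 h2 h12 E) simp
  finally show ?thesis .
qed

theorem mainTheorem2:
  fixes xl xr xb xt T :: real
    and u u1 u2 u11 u12 u21 u22 ut :: "real \<Rightarrow> real \<Rightarrow> real \<Rightarrow> complex"
  assumes dom: "xl < xr" "xb < xt" "T > 0"
    and d_u1: "\<And>x y t. x \<in> {xl..xr} \<Longrightarrow> y \<in> {xb..xt} \<Longrightarrow> t \<in> {0..T} \<Longrightarrow>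
              ((\<lambda>s. u s y t) has_vector_derivative u1 x y t) (at x within {xl..xr})"
    and d_u2: "\<And>x y t. x \<in> {xl..xr} \<Longrightarrow> y \<in> {xb..xt} \<Longrightarrow> t \<in> {0..T} \<Longrightarrow>
              ((\<lambda>s. u x s t) has_vector_derivative u2 x y t) (at y within {xb..xt})"
    and d_u11: "\<And>x y t. x \<in> {xl..xr} \<Longrightarrow> y \<in> {xb..xt} \<Longrightarrow> t \<in> {0..T} \<Longrightarrow>
              ((\<lambda>s. u1 s y t) has_vector_derivative u11 x y t) (at x within {xl..xr})"
    and d_u12: "\<And>x y t. x \<in> {xl..xr} \<Longrightarrow> y \<in> {xb..xt} \<Longrightarrow> t \<in> {0..T} \<Longrightarrow>
              ((\<lambda>s. u1 x s t) has_vector_derivative u12 x y t) (at y within {xb..xt})"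
    and d_u21: "\<And>x y t. x \<in> {xl..xr} \<Longrightarrow> y \<in> {xb..xt} \<Longrightarrow> t \<in> {0..T} \<Longrightarrow>
              ((\<lambda>s. u2 s y t) has_vector_derivative u21 x y t) (at x within {xl..xr})"
    and d_u22: "\<And>x y t. x \<in> {xl..xr} \<Longrightarrow> y \<in> {xb..xt} \<Longrightarrow> t \<in> {0..T} \<Longrightarrow>
              ((\<lambda>s. u2 x s t) has_vector_derivative u22 x y t) (at y within {xb..xt})"
    and d_ut: "\<And>x y t. x \<in> {xl..xr} \<Longrightarrow> y \<in> {xb..xt} \<Longrightarrow> t \<in> {0..T} \<Longrightarrow>
              ((\<lambda>s. u x y s) has_vector_derivative ut x y t) (at t within {0..T})"
    and cont: "\<And>f. f \<in> {u, u1, u2, u11, u12, u21, u22, ut} \<Longrightarrow>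
              continuous_on ({xl..xr} \<times> {xb..xt} \<times> {0..T}) (\<lambda>(x, y, t). f x y t)"
    and init: "\<And>x y. (x \<in> {xl, xr} \<and> y \<in> {xb..xt}) \<or> (x \<in> {xl..xr} \<and> y \<in> {xb, xt})
              \<Longrightarrow> u x y 0 = 0"
    and pde: "\<And>x y t. x \<in> {xl..xr} \<Longrightarrow> y \<in> {xb..xt} \<Longrightarrow> t \<in> {0<..T} \<Longrightarrow>
              \<i> * ut x y t + u11 x y t + u22 x y t = 0"
    and bc_l: "\<And>y t. y \<in> {xb..xt} \<Longrightarrow> t \<in> {0<..T} \<Longrightarrow>
              - u1 xl y t + exp (- \<i> * of_real pi / 4) * frac_deriv_half T (\<lambda>s. u xl y s) t
              - (1/2) * exp (\<i> * of_real pi / 4)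
                  * d2_within {xb..xt} (\<lambda>z. frac_int_half (\<lambda>s. u xl z s) t) y = 0"
    and bc_r: "\<And>y t. y \<in> {xb..xt} \<Longrightarrow> t \<in> {0<..T} \<Longrightarrow>
              u1 xr y t + exp (- \<i> * of_real pi / 4) * frac_deriv_half T (\<lambda>s. u xr y s) t
              - (1/2) * exp (\<i> * of_real pi / 4)
                  * d2_within {xb..xt} (\<lambda>z. frac_int_half (\<lambda>s. u xr z s) t) y = 0"
    and bc_b: "\<And>x t. x \<in> {xl..xr} \<Longrightarrow> t \<in> {0<..T} \<Longrightarrow>
              - u2 x xb t + exp (- \<i> * of_real pi / 4) * frac_deriv_half T (\<lambda>s. u x xb s) t
              - (1/2) * exp (\<i> * of_real pi / 4)
                  * d2_within {xl..xr} (\<lambda>z. frac_int_half (\<lambda>s. u z xb s) t) x = 0"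
    and bc_t: "\<And>x t. x \<in> {xl..xr} \<Longrightarrow> t \<in> {0<..T} \<Longrightarrow>
              u2 x xt t + exp (- \<i> * of_real pi / 4) * frac_deriv_half T (\<lambda>s. u x xt s) t
              - (1/2) * exp (\<i> * of_real pi / 4)
                  * d2_within {xl..xr} (\<lambda>z. frac_int_half (\<lambda>s. u z xt s) t) x = 0"
  shows "\<forall>t \<in> {0<..T}.
           (- u1 xl xb t - u2 xl xb t
              + (3/2) * exp (- \<i> * of_real pi / 4) * frac_deriv_half T (\<lambda>s. u xl xb s) t = 0)
         \<and> (- u1 xl xt t + u2 xl xt t
              + (3/2) * exp (- \<i> * of_real pi / 4) * frac_deriv_half T (\<lambda>s. u xl xt s) t = 0)
         \<and> (u1 xr xb t - u2 xr xb t
              + (3/2) * exp (- \<i> * of_real pi / 4) * frac_deriv_half T (\<lambda>s. u xr xb s) t = 0)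
         \<and> (u1 xr xt t + u2 xr xt t
              + (3/2) * exp (- \<i> * of_real pi / 4) * frac_deriv_half T (\<lambda>s. u xr xt s) t = 0)"
proof -
  let ?R = "{xl..xr} \<times> {xb..xt} \<times> {0..T}"
  have cu: "continuous_on ?R (\<lambda>(x, y, t). u x y t)" "continuous_on ?R (\<lambda>(x, y, t). u1 x y t)"
    "continuous_on ?R (\<lambda>(x, y, t). u2 x y t)" "continuous_on ?R (\<lambda>(x, y, t). u11 x y t)"
    "continuous_on ?R (\<lambda>(x, y, t). u22 x y t)" "continuous_on ?R (\<lambda>(x, y, t). ut x y t)"
    by (rule cont; simp)+
  have laplacian: "d2_within {xb..xt} (\<lambda>z. frac_int_half (\<lambda>s. u x z s) t) y
      + d2_within {xl..xr} (\<lambda>z. frac_int_half (\<lambda>s. u z y s) t) x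
      = - \<i> * frac_deriv_half T (\<lambda>s. u x y s) t"
    if x: "x \<in> {xl..xr}" and y: "y \<in> {xb..xt}" and t: "t \<in> {0<..T}" and "u x y 0 = 0" for x y t
  proof -
    note slice_t = continuous_on_slice[OF continuous_on_slice[OF _ x] y]
    have "d2_within {xb..xt} (\<lambda>z. frac_int_half (\<lambda>s. u x z s) t) y = frac_int_half (u22 x y) t"
      by (rule d2_within_frac_int_half[OF dom(2) t d_u2[OF x] d_u22[OF x] continuous_on_slice[OF cu(1) x]
            continuous_on_slice[OF cu(3) x] continuous_on_slice[OF cu(5) x] y])
    moreover have "d2_within {xl..xr} (\<lambda>z. frac_int_half (\<lambda>s. u z y s) t) x = frac_int_half (u11 x y) t"
      by (rule d2_within_frac_int_half[OF dom(1) t d_u1[OF _ y] d_u11[OF _ y] continuous_on_slice_middle[OF cu(1) y]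
            continuous_on_slice_middle[OF cu(2) y] continuous_on_slice_middle[OF cu(4) y] x])
    moreover have "frac_deriv_half T (\<lambda>s. u x y s) t = frac_int_half (ut x y) t"
      using frac_deriv_half_eq_frac_int_half[OF d_ut[OF x y] slice_t[OF cu(6)] \<open>u x y 0 = 0\<close> t] .
    ultimately show ?thesis
      using frac_int_half_schroedinger[OF slice_t[OF cu(4)] slice_t[OF cu(5)] pde[OF x y] t]
      by (simp add: add.commute)
  qed
  show ?thesis (is "\<forall>t \<in> _. ?corners t")
  proof
    fix t assume t: "t \<in> {0<..T}"
    have x: "xl \<in> {xl..xr}" "xr \<in> {xl..xr}" and y: "xb \<in> {xb..xt}" "xt \<in> {xb..xt}"
      using dom by auto
    have u0: "u xl xb 0 = 0" "u xl xt 0 = 0" "u xr xb 0 = 0" "u xr xt 0 = 0"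
      by (rule init; use dom in auto)+
    note corner = corner_condition_algebra[OF _ _ laplacian i_mult_exp_pi_quarter]
    show "?corners t"
      using corner[OF bc_l[OF y(1) t] bc_b[OF x(1) t] x(1) y(1) t u0(1)]
        corner[OF bc_l[OF y(2) t] bc_t[OF x(1) t] x(1) y(2) t u0(2)]
        corner[OF bc_r[OF y(1) t] bc_b[OF x(2) t] x(2) y(1) t u0(3)]
        corner[OF bc_r[OF y(2) t] bc_t[OF x(2) t] x(2) y(2) t u0(4)]
      by simp
  qed
qed

end
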